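(* Let $\mathcal F$ be a saturated fusion system on a finite $p$-group $S$, and let $Q\trianglelefteq P\le S$ with $P$ fully $\mathcal F$-normalized and $C_S(\xi(Q))\le P$ for all $\xi\in\operatorname{Aut}_\mathcal F(P)$. Then $Q$ is fully $\mathcal F$-centralized.
   Context: Fusion systems: Let $S$ be a finite $p$-group. A fusion system $\mathcal F$ on $S$ is a category whose objects are the subgroups of $S$ and whose morphism sets $\operatorname{Hom}_\mathcal F(P,Q)$ are sets of injective group homomorphisms $P\to Q$, such that (i) every conjugation map $x\mapsto gxg^{-1}$, $g\in S$, from $P$ to $Q$ lies in $\operatorname{Hom}_\mathcal F(P,Q)$, and (ii) every $\varphi\in\operatorname{Hom}_\mathcal F(P,Q)$ factors as an isomorphism $P\to\varphi(P)$ in $\mathcal F$ with inverse in $\mathcal F$ followed by inclusion. $Q$ is fully $\mathcal F$-normalized (resp. centralized) if $|N_S(Q)|$ (resp. $|C_S(Q)|$) is maximal among $\mathcal F$-conjugates of $Q$. For $\varphi\in\operatorname{Hom}_\mathcal F(Q,S)$, $N_\varphi=\{g\in N_S(Q):\varphi c_g|_Q\varphi^{-1}\in\operatorname{Aut}_S(\varphi(Q))\}$, $\operatorname{Aut}_S(\cdot)$ denoting automorphisms induced by conjugation by elements of $S$. $\mathcal F$ is saturated if every fully normalized $Q$ is fully centralized with $\operatorname{Aut}_S(Q)$ a Sylow $p$-subgroup of $\operatorname{Aut}_\mathcal F(Q)$, and every $\varphi\in\operatorname{Hom}_\mathcal F(Q,S)$ with $\varphi(Q)$ fully centralized extends to a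 morphism of $\mathcal F$ defined on $N_\varphi$. *)

theory Defs
  imports "HOL-Algebra.Algebra" "HOL-Computational_Algebra.Primes"
begin

text \<open>A fusion system on the finite p-group G (= S) is given by a function
  F with F P Q = Hom_F(P,Q), a set of maps P -> Q.  Maps are HOL functions
  made canonical by requiring them to be extensional (undefined outside P).\<close>

definition centralizer :: "('a, 'b) monoid_scheme \<Rightarrow> 'a set \<Rightarrow> 'a set" where
  "centralizer G H = {g \<in> carrier G. \<forall>h \<in> H. g \<otimes>\<^bsub>G\<^esub> h = h \<otimes>\<^bsub>G\<^esub> g}"

definition conjmap :: "('a, 'b) monoid_scheme \<Rightarrow> 'a \<Rightarrow> 'a set \<Rightarrow> 'a \<Rightarrow> 'a" where
  "conjmap G g P = (\<lambda>x \<in> P. g \<otimes>\<^bsub>G\<^esub> x \<otimes>\<^bsub>G\<^esub> inv\<^bsub>G\<^esub> g)"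

definition inj_homs :: "('a, 'b) monoid_scheme \<Rightarrow> 'a set \<Rightarrow> 'a set \<Rightarrow> ('a \<Rightarrow> 'a) set" where
  "inj_homs G P Q = {\<phi>. \<phi> \<in> extensional P \<and> \<phi> ` P \<subseteq> Q \<and> inj_on \<phi> P \<and>
      (\<forall>x \<in> P. \<forall>y \<in> P. \<phi> (x \<otimes>\<^bsub>G\<^esub> y) = \<phi> x \<otimes>\<^bsub>G\<^esub> \<phi> y)}"

definition finite_p_group :: "nat \<Rightarrow> ('a, 'b) monoid_scheme \<Rightarrow> bool" where
  "finite_p_group p G \<longleftrightarrow> group G \<and> Factorial_Ring.prime p \<and> finite (carrier G) \<and>
      (\<exists>n. card (carrier G) = p ^ n)"

definition fusion_system ::
  "nat \<Rightarrow> ('a, 'b) monoid_scheme \<Rightarrow> ('a set \<Rightarrow> 'a set \<Rightarrow> ('a \<Rightarrow> 'a) set) \<Rightarrow> bool" where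
  "fusion_system p G F \<longleftrightarrow> finite_p_group p G \<and>
     \<comment> \<open>objects are the subgroups; morphisms are injective homomorphisms\<close>
     (\<forall>P Q. F P Q \<noteq> {} \<longrightarrow> subgroup P G \<and> subgroup Q G) \<and>
     (\<forall>P Q. F P Q \<subseteq> inj_homs G P Q) \<and>
     \<comment> \<open>category: closed under composition\<close>
     (\<forall>P Q R \<phi> \<psi>. \<phi> \<in> F P Q \<longrightarrow> \<psi> \<in> F Q R \<longrightarrow> (\<lambda>x \<in> P. \<psi> (\<phi> x)) \<in> F P R) \<and>
     \<comment> \<open>(i) conjugation maps by elements of S\<close>
     (\<forall>P Q g. subgroup P G \<longrightarrow> subgroup Q G \<longrightarrow> g \<in> carrier G \<longrightarrow>
        conjmap G g P ` P \<subseteq> Q \<longrightarrow> conjmap G g P \<in> F P Q) \<and>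
     \<comment> \<open>(ii) factorisation: isomorphism onto the image with inverse in F, then inclusion\<close>
     (\<forall>P Q \<phi>. \<phi> \<in> F P Q \<longrightarrow>
        \<phi> \<in> F P (\<phi> ` P) \<and> (\<lambda>y \<in> \<phi> ` P. the_inv_into P \<phi> y) \<in> F (\<phi> ` P) P)"

definition AutF :: "('a set \<Rightarrow> 'a set \<Rightarrow> ('a \<Rightarrow> 'a) set) \<Rightarrow> 'a set \<Rightarrow> ('a \<Rightarrow> 'a) set" where
  "AutF F P = F P P"

definition AutS :: "('a, 'b) monoid_scheme \<Rightarrow> 'a set \<Rightarrow> ('a \<Rightarrow> 'a) set" where
  "AutS G P = (\<lambda>g. conjmap G g P) ` normalizer G P"

definition F_conjugates :: "('a, 'b) monoid_scheme \<Rightarrow> ('a set \<Rightarrow> 'a set \<Rightarrow> ('a \<Rightarrow> 'a) set) \<Rightarrow> 'a set \<Rightarrow> 'a set set" where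
  "F_conjugates G F Q = {\<phi> ` Q | \<phi>. \<phi> \<in> F Q (carrier G)}"

definition fully_normalized where
  "fully_normalized G F Q \<longleftrightarrow> subgroup Q G \<and>
     (\<forall>R \<in> F_conjugates G F Q. card (normalizer G R) \<le> card (normalizer G Q))"

definition fully_centralized where
  "fully_centralized G F Q \<longleftrightarrow> subgroup Q G \<and>
     (\<forall>R \<in> F_conjugates G F Q. card (centralizer G R) \<le> card (centralizer G Q))"

text \<open>Sylow p-subgroup H of a finite group K (H already known to be a subgroup):
  H \<subseteq> K and |H| is the full p-part of |K|.\<close>
definition sylow_in :: "nat \<Rightarrow> 'c set \<Rightarrow> 'c set \<Rightarrow> bool" where
  "sylow_in p H K \<longleftrightarrow> H \<subseteq> K \<and> card H = p ^ multiplicity p (card K)"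

definition N_phi :: "('a, 'b) monoid_scheme \<Rightarrow> 'a set \<Rightarrow> ('a \<Rightarrow> 'a) \<Rightarrow> 'a set" where
  "N_phi G Q \<phi> = {g \<in> normalizer G Q. \<exists>h \<in> normalizer G (\<phi> ` Q).
      \<forall>y \<in> Q. \<phi> (g \<otimes>\<^bsub>G\<^esub> y \<otimes>\<^bsub>G\<^esub> inv\<^bsub>G\<^esub> g) = h \<otimes>\<^bsub>G\<^esub> \<phi> y \<otimes>\<^bsub>G\<^esub> inv\<^bsub>G\<^esub> h}"

definition saturated ::
  "nat \<Rightarrow> ('a, 'b) monoid_scheme \<Rightarrow> ('a set \<Rightarrow> 'a set \<Rightarrow> ('a \<Rightarrow> 'a) set) \<Rightarrow> bool" where
  "saturated p G F \<longleftrightarrow> fusion_system p G F \<and>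
     (\<forall>Q. fully_normalized G F Q \<longrightarrow>
        fully_centralized G F Q \<and> sylow_in p (AutS G Q) (AutF F Q)) \<and>
     (\<forall>Q \<phi>. subgroup Q G \<longrightarrow> \<phi> \<in> F Q (carrier G) \<longrightarrow> fully_centralized G F (\<phi> ` Q) \<longrightarrow>
        (\<exists>\<psi> \<in> F (N_phi G Q \<phi>) (carrier G). \<forall>x \<in> Q. \<psi> x = \<phi> x))"

end

theory Submission
  imports Defs
begin

text \<open>
  Pick a fully normalized \<open>\<F>\<close>-conjugate \<open>R\<close> of \<open>Q\<close>; it is fully centralized by
  saturation, so it suffices to show \<open>|C\<^sub>S(R)| \<le> |C\<^sub>S(Q)|\<close>.  By the extension lemma (an
  isomorphism onto a fully normalized subgroup can be chosen to extend to the normalizer of its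
  source) there is \<open>\<alpha> \<in> \<F>(N\<^sub>S(Q), S)\<close> with \<open>\<alpha>(Q) = R\<close>.  Put \<open>P' = \<alpha>(P)\<close>; the extension lemma
  for \<open>P\<close> gives \<open>\<beta> \<in> \<F>(N\<^sub>S(P'), S)\<close> with \<open>\<beta>(P') = P\<close>, and \<open>\<xi> = \<beta>\<alpha>|\<^sub>P \<in> Aut\<^sub>\<F>(P)\<close>
  shows that elements of \<open>C\<^sub>S(R)\<close> normalizing \<open>P'\<close> lie in \<open>P'\<close>.  As \<open>P'\<close> normalizes \<open>C\<^sub>S(R)\<close>,
  "normalizers grow" yields \<open>C\<^sub>S(R) \<le> P' = \<alpha>(P)\<close>, and pulling back along \<open>\<alpha>\<close> embeds \<open>C\<^sub>S(R)\<close>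
  into \<open>C\<^sub>S(Q)\<close>.
\<close>

lemma (in group) normalizer_iff:
  assumes "H \<subseteq> carrier G"
  shows "g \<in> normalizer G H \<longleftrightarrow> g \<in> carrier G \<and> (\<lambda>h. g \<otimes> h \<otimes> inv g) ` H = H"
proof -
  have "g <# H #> inv g = (\<lambda>h. g \<otimes> h \<otimes> inv g) ` H"
    by (auto simp: l_coset_def r_coset_def)
  then show ?thesis
    using assms by (auto simp: normalizer_def stabilizer_def)
qed

lemma (in group) normalizer_conj:
  assumes "H \<subseteq> carrier G" "g \<in> normalizer G H" "h \<in> H"
  shows "g \<otimes> h \<otimes> inv g \<in> H"
  using assms normalizer_iff by blast

lemma (in group) normalizer_carrier:
  assumes "H \<subseteq> carrier G" "g \<in> normalizer G H"
  shows "g \<in> carrier G"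
  using assms normalizer_iff by blast

lemma (in group) normalizer_intro:
  assumes "finite H" "H \<subseteq> carrier G" "g \<in> carrier G" "\<And>h. h \<in> H \<Longrightarrow> g \<otimes> h \<otimes> inv g \<in> H"
  shows "g \<in> normalizer G H"
proof -
  have "inj_on (\<lambda>h. g \<otimes> h \<otimes> inv g) H"
    using assms(2,3) by (auto simp: inj_on_def subset_iff)
  then have "card ((\<lambda>h. g \<otimes> h \<otimes> inv g) ` H) = card H"
    by (rule card_image)
  moreover have "(\<lambda>h. g \<otimes> h \<otimes> inv g) ` H \<subseteq> H"
    using assms(4) by auto
  ultimately have "(\<lambda>h. g \<otimes> h \<otimes> inv g) ` H = H"
    using card_subset_eq[OF assms(1)] by simp
  then show ?thesis
    using normalizer_iff assms by blast
qed

lemma (in group) subgroup_le_normalizer: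
  assumes "subgroup H G"
  shows "H \<subseteq> normalizer G H"
  using normal_imp_subgroup[OF subgroup_in_normalizer[OF assms]] subgroup.subset by force

lemma (in group) conj_conj:
  assumes "g \<in> carrier G" "h \<in> carrier G" "y \<in> carrier G"
  shows "g \<otimes> (h \<otimes> y \<otimes> inv h) \<otimes> inv g = (g \<otimes> h) \<otimes> y \<otimes> inv (g \<otimes> h)"
  using assms by (simp add: inv_mult_group m_assoc)

lemma (in group) centralizer_subgroup:
  assumes "R \<subseteq> carrier G"
  shows "subgroup (centralizer G R) G"
proof (rule subgroupI)
  show "centralizer G R \<subseteq> carrier G" "centralizer G R \<noteq> {}"
    using assms by (auto simp: centralizer_def intro!: exI[of _ \<one>])
next
  fix a assume "a \<in> centralizer G R"
  then have a: "a \<in> carrier G" "\<And>h. h \<in> R \<Longrightarrow> a \<otimes> h = h \<otimes> a"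
    by (auto simp: centralizer_def)
  have "inv a \<otimes> h = h \<otimes> inv a" if h: "h \<in> R" for h
  proof -
    have hc: "h \<in> carrier G" using h assms by auto
    have "inv a \<otimes> h = inv a \<otimes> (h \<otimes> a) \<otimes> inv a" using a hc by (simp add: m_assoc)
    also have "\<dots> = inv a \<otimes> (a \<otimes> h) \<otimes> inv a" using a(2)[OF h] by simp
    also have "\<dots> = h \<otimes> inv a" using a hc by (simp add: m_assoc[symmetric])
    finally show ?thesis .
  qed
  then show "inv a \<in> centralizer G R"
    using a by (auto simp: centralizer_def)
next
  fix a b assume "a \<in> centralizer G R" "b \<in> centralizer G R"
  then have ab: "a \<in> carrier G" "b \<in> carrier G"
    "\<And>h. h \<in> R \<Longrightarrow> a \<otimes> h = h \<otimes> a" "\<And>h. h \<in> R \<Longrightarrow> b \<otimes> h = h \<otimes> b"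
    by (auto simp: centralizer_def)
  have "a \<otimes> b \<otimes> h = h \<otimes> (a \<otimes> b)" if h: "h \<in> R" for h
  proof -
    have hc: "h \<in> carrier G" using h assms by auto
    have "a \<otimes> b \<otimes> h = a \<otimes> (h \<otimes> b)" using ab hc ab(4)[OF h] by (simp add: m_assoc)
    also have "\<dots> = (a \<otimes> h) \<otimes> b" using ab hc by (simp add: m_assoc)
    also have "\<dots> = h \<otimes> (a \<otimes> b)" using ab hc ab(3)[OF h] by (simp add: m_assoc)
    finally show ?thesis .
  qed
  then show "a \<otimes> b \<in> centralizer G R"
    using ab by (auto simp: centralizer_def)
qed

lemma (in group) conj_in_centralizer:
  assumes R: "R \<subseteq> carrier G" and x: "x \<in> carrier G"
    and normalizes: "\<And>r. r \<in> R \<Longrightarrow> inv x \<otimes> r \<otimes> x \<in> R" and d: "d \<in> centralizer G R"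
  shows "x \<otimes> d \<otimes> inv x \<in> centralizer G R"
proof -
  have dc: "d \<in> carrier G" and dcom: "\<And>r. r \<in> R \<Longrightarrow> d \<otimes> r = r \<otimes> d"
    using d by (auto simp: centralizer_def)
  have "(x \<otimes> d \<otimes> inv x) \<otimes> r = r \<otimes> (x \<otimes> d \<otimes> inv x)" if r: "r \<in> R" for r
  proof -
    have rc: "r \<in> carrier G" using R r by blast
    have "(x \<otimes> d \<otimes> inv x) \<otimes> r = x \<otimes> (d \<otimes> (inv x \<otimes> r \<otimes> x)) \<otimes> inv x"
      using x dc rc by (simp add: m_assoc)
    also have "\<dots> = x \<otimes> ((inv x \<otimes> r \<otimes> x) \<otimes> d) \<otimes> inv x"
      using dcom[OF normalizes[OF r]] by simp
    also have "\<dots> = r \<otimes> (x \<otimes> d \<otimes> inv x)"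
      using x dc rc by (simp add: m_assoc[symmetric])
    finally show ?thesis .
  qed
  then show ?thesis using x dc by (auto simp: centralizer_def)
qed

lemma (in group) normal_in_subgroup:
  assumes P: "subgroup P G" and Q: "normal Q (G\<lparr>carrier := P\<rparr>)"
  shows "subgroup Q G" and "Q \<subseteq> P" and "P \<subseteq> normalizer G Q"
proof -
  have "subgroup Q (G\<lparr>carrier := P\<rparr>)" using normal_imp_subgroup[OF Q] .
  then show "subgroup Q G" and "Q \<subseteq> P"
    using incl_subgroup[OF P] subgroup.subset by force+
  show "P \<subseteq> normalizer G Q"
    using subgroup.subset[OF normal_imp_subgroup_normalizer[OF P Q]] by simp
qed

subsection \<open>Actions of finite p-groups\<close>

text \<open>An action of the group \<open>H\<close> on the set \<open>E\<close>, given by a plain function; restricting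
  each \<open>f g\<close> to \<open>E\<close> yields an instance of the library locale \<open>group_action\<close>.\<close>

definition is_action :: "('l, 'm) monoid_scheme \<Rightarrow> 'x set \<Rightarrow> ('l \<Rightarrow> 'x \<Rightarrow> 'x) \<Rightarrow> bool" where
  "is_action H E f \<longleftrightarrow> (\<forall>g\<in>carrier H. \<forall>x\<in>E. f g x \<in> E) \<and> (\<forall>x\<in>E. f \<one>\<^bsub>H\<^esub> x = x) \<and>
     (\<forall>g\<in>carrier H. \<forall>h\<in>carrier H. \<forall>x\<in>E. f (g \<otimes>\<^bsub>H\<^esub> h) x = f g (f h x))"

lemma is_action_inv:
  assumes H: "group H" and a: "is_action H E f" and g: "g \<in> carrier H" and x: "x \<in> E"
  shows "f (inv\<^bsub>H\<^esub> g) (f g x) = x" and "f g (f (inv\<^bsub>H\<^esub> g) x) = x"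
proof -
  have ig: "inv\<^bsub>H\<^esub> g \<in> carrier H" using group.inv_closed[OF H g] .
  have one: "f \<one>\<^bsub>H\<^esub> x = x"
    and comp: "\<And>h k. h \<in> carrier H \<Longrightarrow> k \<in> carrier H \<Longrightarrow> f (h \<otimes>\<^bsub>H\<^esub> k) x = f h (f k x)"
    using a x by (auto simp: is_action_def)
  show "f (inv\<^bsub>H\<^esub> g) (f g x) = x"
    using comp[OF ig g] one group.l_inv[OF H g] by simp
  show "f g (f (inv\<^bsub>H\<^esub> g) x) = x"
    using comp[OF g ig] one group.r_inv[OF H g] by simp
qed

lemma is_action_group_action:
  assumes H: "group H" and a: "is_action H E f"
  shows "group_action H E (\<lambda>g. restrict (f g) E)"
proof -
  have closed: "\<And>g x. g \<in> carrier H \<Longrightarrow> x \<in> E \<Longrightarrow> f g x \<in> E"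
    and comp: "\<And>g h x. g \<in> carrier H \<Longrightarrow> h \<in> carrier H \<Longrightarrow> x \<in> E \<Longrightarrow>
      f (g \<otimes>\<^bsub>H\<^esub> h) x = f g (f h x)"
    using a unfolding is_action_def by auto
  have bij: "restrict (f g) E \<in> Bij E" if g: "g \<in> carrier H" for g
  proof -
    have "bij_betw (f g) E E"
      by (rule bij_betw_byWitness[where f'="f (inv\<^bsub>H\<^esub> g)"])
        (use is_action_inv[OF H a g] closed g group.inv_closed[OF H g] in auto)
    then have "bij_betw (restrict (f g) E) E E"
      by (metis bij_betw_cong restrict_apply')
    then show ?thesis unfolding Bij_def by auto
  qed
  have "(\<lambda>g. restrict (f g) E) \<in> hom H (BijGroup E)"
  proof (rule homI)
    show "restrict (f g) E \<in> carrier (BijGroup E)" if "g \<in> carrier H" for g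
      using bij[OF that] by (simp add: BijGroup_def)
    show "restrict (f (g \<otimes>\<^bsub>H\<^esub> h)) E = restrict (f g) E \<otimes>\<^bsub>BijGroup E\<^esub> restrict (f h) E"
      if "g \<in> carrier H" "h \<in> carrier H" for g h
      using bij[OF that(1)] bij[OF that(2)] that
      by (auto simp: BijGroup_def compose_def comp closed fun_eq_iff)
  qed
  then show ?thesis
    unfolding group_action_def group_hom_def group_hom_axioms_def
    using H group_BijGroup by blast
qed

definition orbit_of :: "('l, 'm) monoid_scheme \<Rightarrow> ('l \<Rightarrow> 'x \<Rightarrow> 'x) \<Rightarrow> 'x \<Rightarrow> 'x set" where
  "orbit_of H f x = {f g x | g. g \<in> carrier H}"

lemma finite_p_group_subgroup:
  assumes G: "finite_p_group p G" and H: "subgroup H G"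
  shows "finite_p_group p (G\<lparr>carrier := H\<rparr>)"
proof -
  obtain n where grp: "group G" and fin: "finite (carrier G)" and p: "Factorial_Ring.prime p"
    and n: "card (carrier G) = p ^ n"
    using G by (auto simp: finite_p_group_def)
  have "card H dvd p ^ n"
    using group.lagrange[OF grp H] n unfolding order_def by (metis dvd_triv_right)
  then obtain i where "card H = p ^ i"
    using divides_primepow_nat[OF p] by blast
  then show ?thesis
    using group.subgroup_imp_group[OF grp H] p finite_subset[OF subgroup.subset[OF H] fin]
    by (auto simp: finite_p_group_def)
qed

text \<open>Orbit--stabilizer: orbits of a p-group have p-power size.\<close>

lemma orbit_card_prime_power:
  assumes H: "finite_p_group p H" and a: "is_action H E f" and x: "x \<in> E"
  shows "\<exists>i. card (orbit_of H f x) = p ^ i"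
proof -
  have grp: "group H" and "Factorial_Ring.prime p" and cH: "\<exists>n. card (carrier H) = p ^ n"
    using H by (auto simp: finite_p_group_def)
  interpret group_action H E "\<lambda>g. restrict (f g) E"
    using is_action_group_action[OF grp a] .
  have "orbit H (\<lambda>g. restrict (f g) E) x = orbit_of H f x"
    using x by (auto simp: orbit_def orbit_of_def)
  then have "card (orbit_of H f x) dvd order H"
    using orbit_stabilizer_theorem[OF x] by (metis dvd_triv_left)
  then show ?thesis
    using cH divides_primepow_nat[OF \<open>Factorial_Ring.prime p\<close>] by (auto simp: order_def)
qed

text \<open>Without fixed points every orbit of a p-group has size divisible by \<open>p\<close>, hence so has \<open>E\<close>.\<close>

lemma p_dvd_card_without_fixed_points:
  assumes H: "finite_p_group p H" and a: "is_action H E f" and E: "finite E"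
    and nofix: "\<And>x. x \<in> E \<Longrightarrow> \<exists>g\<in>carrier H. f g x \<noteq> x"
  shows "p dvd card E"
proof -
  have grp: "group H" using H by (simp add: finite_p_group_def)
  interpret group_action H E "\<lambda>g. restrict (f g) E"
    using is_action_group_action[OF grp a] .
  have "p dvd card orb" if orb: "orb \<in> orbits H E (\<lambda>g. restrict (f g) E)" for orb
  proof -
    obtain x where x: "x \<in> E" and orb_eq: "orb = orbit_of H f x"
      using orb unfolding orbits_def orbit_def orbit_of_def by force
    obtain i where i: "card orb = p ^ i"
      using orbit_card_prime_power[OF H a x] orb_eq by blast
    obtain g where g: "g \<in> carrier H" "f g x \<noteq> x" using nofix[OF x] by blast
    have "x = f \<one>\<^bsub>H\<^esub> x" using a x by (simp add: is_action_def)
    then have "x \<in> orb" "f g x \<in> orb"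
      using orb_eq g(1) group.is_monoid[OF grp] monoid.one_closed unfolding orbit_of_def by blast+
    moreover have "finite orb"
    proof -
      have "orb \<subseteq> E"
        using orb_eq a x by (auto simp: orbit_of_def is_action_def)
      then show ?thesis using E finite_subset by blast
    qed
    ultimately have "card {x, f g x} \<le> card orb"
      by (intro card_mono) auto
    then have "i \<noteq> 0" using g(2) i by (cases "i = 0") auto
    then show ?thesis using i by (simp add: dvd_power)
  qed
  moreover have "card E = (\<Sum>orb\<in>orbits H E (\<lambda>g. restrict (f g) E). card orb)"
    using disjoint_sum[OF E, of "\<lambda>_. 1::nat"] by simp
  ultimately show ?thesis by (simp add: dvd_sum)
qed

lemma fixed_points_congruence:
  assumes H: "finite_p_group p H" and a: "is_action H E f" and E: "finite E"
  shows "card E mod p = card {x\<in>E. \<forall>g\<in>carrier H. f g x = x} mod p"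
proof -
  define Fix where "Fix = {x\<in>E. \<forall>g\<in>carrier H. f g x = x}"
  have grp: "group H" using H by (simp add: finite_p_group_def)
  have "f g x \<notin> Fix" if g: "g \<in> carrier H" and x: "x \<in> E - Fix" for g x
  proof
    assume fixed: "f g x \<in> Fix"
    then have "f g x = x"
      using is_action_inv(1)[OF grp a g] x group.inv_closed[OF grp g] by (auto simp: Fix_def)
    then show False using fixed x by simp
  qed
  then have "is_action H (E - Fix) f"
    using a by (auto simp: is_action_def)
  then have "p dvd card (E - Fix)"
    by (rule p_dvd_card_without_fixed_points[OF H _ finite_Diff[OF E]]) (auto simp: Fix_def)
  then obtain k where k: "card (E - Fix) = p * k" ..
  moreover have "card E = card (E - Fix) + card Fix"
  proof -
    have sub: "Fix \<subseteq> E" by (auto simp: Fix_def)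
    then show ?thesis
      using card_Diff_subset[OF finite_subset[OF sub E] sub] card_mono[OF E sub] by simp
  qed
  ultimately have "card E = p * k + card Fix" by linarith
  then show ?thesis
    unfolding Fix_def[symmetric] by simp
qed

lemma sylow_index_coprime:
  assumes A: "group A" "finite (carrier A)" and K: "subgroup K A"
    and cK: "card K = p ^ multiplicity p (order A)" and p: "Factorial_Ring.prime p"
  shows "\<not> p dvd card (rcosets\<^bsub>A\<^esub> K)"
proof
  assume "p dvd card (rcosets\<^bsub>A\<^esub> K)"
  then have "p * p ^ multiplicity p (order A) dvd order A"
    using group.lagrange[OF A(1) K] cK by (metis mult_dvd_mono dvd_refl mult.commute)
  then have "p ^ Suc (multiplicity p (order A)) dvd order A" by simp
  moreover have "order A > 0"
    using A monoid.one_closed[OF group.is_monoid[OF A(1)]] by (auto simp: order_def card_gt_0_iff)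
  moreover have "\<not> is_unit p" using p by (metis not_prime_unit)
  ultimately show False
    using power_dvd_iff_le_multiplicity[of "order A" p]
    by (metis Suc_n_not_le_n less_numeral_extra(3))
qed

lemma rcosets_action_via_hom:
  assumes "group_hom H A l" and K: "subgroup K A"
  shows "is_action H (rcosets\<^bsub>A\<^esub> K) (\<lambda>g C. C #>\<^bsub>A\<^esub> inv\<^bsub>A\<^esub> (l g))"
proof -
  interpret group_hom H A l by fact
  have Ksub: "K \<subseteq> carrier A" using K subgroup.subset by blast
  show ?thesis
    unfolding is_action_def
  proof (intro conjI ballI)
    fix g C assume g: "g \<in> carrier H" and "C \<in> rcosets\<^bsub>A\<^esub> K"
    then obtain a where a: "a \<in> carrier A" "C = K #>\<^bsub>A\<^esub> a" unfolding RCOSETS_def by auto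
    then show "C #>\<^bsub>A\<^esub> inv\<^bsub>A\<^esub> l g \<in> rcosets\<^bsub>A\<^esub> K"
      using H.coset_mult_assoc[OF Ksub a(1), of "inv\<^bsub>A\<^esub> l g"] g
      by (simp add: H.rcosetsI Ksub)
  next
    fix C assume "C \<in> rcosets\<^bsub>A\<^esub> K"
    then show "C #>\<^bsub>A\<^esub> inv\<^bsub>A\<^esub> l \<one>\<^bsub>H\<^esub> = C"
      using H.coset_mult_one subgroup.rcosets_carrier[OF K H.is_group] by simp
  next
    fix g h C assume g: "g \<in> carrier H" and h: "h \<in> carrier H" and "C \<in> rcosets\<^bsub>A\<^esub> K"
    then have "C \<subseteq> carrier A" using subgroup.rcosets_carrier[OF K H.is_group] by blast
    then show "C #>\<^bsub>A\<^esub> inv\<^bsub>A\<^esub> l (g \<otimes>\<^bsub>H\<^esub> h) = C #>\<^bsub>A\<^esub> inv\<^bsub>A\<^esub> l h #>\<^bsub>A\<^esub> inv\<^bsub>A\<^esub> l g"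
      using g h by (simp add: H.inv_mult_group H.coset_mult_assoc)
  qed
qed

text \<open>A coset fixed by the action above exists
  since the index of \<open>K\<close> is prime to \<open>p\<close>; its representative conjugates \<open>l(H)\<close> into \<open>K\<close>.\<close>

lemma conj_into_sylow:
  assumes H: "finite_p_group p H" and A: "group A" "finite (carrier A)"
    and K: "subgroup K A" "card K = p ^ multiplicity p (order A)"
    and l: "l \<in> hom H A"
  shows "\<exists>b\<in>carrier A. \<forall>g\<in>carrier H. b \<otimes>\<^bsub>A\<^esub> l g \<otimes>\<^bsub>A\<^esub> inv\<^bsub>A\<^esub> b \<in> K"
proof -
  have grpH: "group H" and p: "Factorial_Ring.prime p"
    using H by (auto simp: finite_p_group_def)
  interpret group_hom H A l
    using grpH A(1) l by (simp add: group_hom_def group_hom_axioms_def)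
  define f where "f g C = C #>\<^bsub>A\<^esub> inv\<^bsub>A\<^esub> (l g)" for g C
  have act: "is_action H (rcosets\<^bsub>A\<^esub> K) f"
    unfolding f_def by (rule rcosets_action_via_hom[OF group_hom_axioms K(1)])
  have "finite (rcosets\<^bsub>A\<^esub> K)"
    using A(2) H.rcosets_subset_PowG[OF K(1)] finite_subset by (metis finite_Pow_iff)
  then have "card {C \<in> rcosets\<^bsub>A\<^esub> K. \<forall>g\<in>carrier H. f g C = C} mod p \<noteq> 0"
    using fixed_points_congruence[OF H act] sylow_index_coprime[OF A K p]
    by (simp add: dvd_eq_mod_eq_0)
  then have "{C \<in> rcosets\<^bsub>A\<^esub> K. \<forall>g\<in>carrier H. f g C = C} \<noteq> {}"
    by (metis card.empty mod_0)
  then obtain C where "C \<in> rcosets\<^bsub>A\<^esub> K" and fixed: "\<forall>g\<in>carrier H. f g C = C"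
    by blast
  then obtain b where b: "b \<in> carrier A" "C = K #>\<^bsub>A\<^esub> b" unfolding RCOSETS_def by auto
  have Ksub: "K \<subseteq> carrier A" using K(1) subgroup.subset by blast
  show ?thesis
  proof (intro bexI[OF _ b(1)] ballI)
    fix g assume g: "g \<in> carrier H"
    have "K #>\<^bsub>A\<^esub> (b \<otimes>\<^bsub>A\<^esub> inv\<^bsub>A\<^esub> l g) = K #>\<^bsub>A\<^esub> b"
      using fixed g b H.coset_mult_assoc[OF Ksub b(1)] unfolding f_def by simp
    then have "b \<otimes>\<^bsub>A\<^esub> inv\<^bsub>A\<^esub> l g \<otimes>\<^bsub>A\<^esub> inv\<^bsub>A\<^esub> b \<in> K"
      using H.coset_mult_inv2[of K "b \<otimes>\<^bsub>A\<^esub> inv\<^bsub>A\<^esub> l g" b] b g Ksub H.coset_join1[OF _ _ K(1)]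
      by simp
    then have "inv\<^bsub>A\<^esub> (b \<otimes>\<^bsub>A\<^esub> inv\<^bsub>A\<^esub> l g \<otimes>\<^bsub>A\<^esub> inv\<^bsub>A\<^esub> b) \<in> K"
      by (rule subgroup.m_inv_closed[OF K(1)])
    then show "b \<otimes>\<^bsub>A\<^esub> l g \<otimes>\<^bsub>A\<^esub> inv\<^bsub>A\<^esub> b \<in> K"
      using b g by (simp add: H.inv_mult_group H.m_assoc)
  qed
qed

lemma (in group) stable_coset_normalizes:
  assumes fin: "finite (carrier G)" and P: "subgroup P G" and d: "d \<in> carrier G"
    and stable: "\<And>y. y \<in> P \<Longrightarrow> P #> d #> y = P #> d"
  shows "d \<in> normalizer G P"
proof -
  have Ps: "P \<subseteq> carrier G" using subgroup.subset[OF P] .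
  have "d \<otimes> y \<otimes> inv d \<in> P" if y: "y \<in> P" for y
  proof -
    have yc: "y \<in> carrier G" using Ps y by blast
    have "P #> (d \<otimes> y) = P #> d"
      using stable[OF y] coset_mult_assoc[OF Ps d yc] by simp
    then have "P #> (d \<otimes> y \<otimes> inv d) = P"
      using coset_mult_inv2[OF _ _ d Ps] d yc by simp
    then show ?thesis using coset_join1[OF _ _ P] d yc by simp
  qed
  then show ?thesis
    using normalizer_intro[OF finite_subset[OF Ps fin] Ps d] by blast
qed

lemma (in group) P_fixed_coset:
  assumes fin: "finite (carrier G)" and P: "subgroup P G" and D: "subgroup D G"
    and N_D_P: "\<And>d. d \<in> D \<Longrightarrow> d \<in> normalizer G P \<Longrightarrow> d \<in> P"
  shows "{C \<in> {P #> d | d. d \<in> D}. \<forall>x\<in>P. C #> inv x = C} = {P}"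
proof (intro equalityI subsetI)
  have Ps: "P \<subseteq> carrier G" using subgroup.subset[OF P] .
  fix C assume "C \<in> {C \<in> {P #> d | d. d \<in> D}. \<forall>x\<in>P. C #> inv x = C}"
  then obtain d where d: "d \<in> D" "C = P #> d" and stable: "\<And>x. x \<in> P \<Longrightarrow> C #> inv x = C"
    by auto
  have dc: "d \<in> carrier G" using d subgroup.subset[OF D] by blast
  have "P #> d #> y = P #> d" if "y \<in> P" for y
    using stable[OF subgroup.m_inv_closed[OF P that]] d(2) that Ps by auto
  then have "d \<in> P"
    using N_D_P[OF d(1)] stable_coset_normalizes[OF fin P dc] by blast
  then show "C \<in> {P}" using d coset_join2[OF dc P] by simp
next
  fix C assume "C \<in> {P}"
  moreover have "P = P #> \<one>" using coset_mult_one subgroup.subset[OF P] by simp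
  ultimately show "C \<in> {C \<in> {P #> d | d. d \<in> D}. \<forall>x\<in>P. C #> inv x = C}"
    using subgroup.one_closed[OF D] coset_join2[OF _ P] subgroup.m_inv_closed[OF P]
      subgroup.mem_carrier[OF P] by auto
qed

lemma (in group) right_coset_action:
  assumes P: "subgroup P G" and H: "subgroup H G" and D: "D \<subseteq> carrier G"
    and stable: "\<And>x d. x \<in> H \<Longrightarrow> d \<in> D \<Longrightarrow> P #> (d \<otimes> inv x) \<in> {P #> d | d. d \<in> D}"
  shows "is_action (G\<lparr>carrier := H\<rparr>) {P #> d | d. d \<in> D} (\<lambda>x C. C #> inv x)"
proof -
  have Ps: "P \<subseteq> carrier G" using subgroup.subset[OF P] .
  have Hc: "\<And>x. x \<in> H \<Longrightarrow> x \<in> carrier G" using subgroup.subset[OF H] by blast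
  show ?thesis
    unfolding is_action_def
  proof (intro conjI ballI)
    fix x C assume x: "x \<in> carrier (G\<lparr>carrier := H\<rparr>)" and "C \<in> {P #> d | d. d \<in> D}"
    then obtain d where d: "d \<in> D" "C = P #> d" by auto
    have "x \<in> carrier G" using x Hc by simp
    then have "C #> inv x = P #> (d \<otimes> inv x)"
      using d D coset_mult_assoc[OF Ps] by auto
    then show "C #> inv x \<in> {P #> d | d. d \<in> D}"
      using stable[of x d] x d by simp
  next
    fix C assume "C \<in> {P #> d | d. d \<in> D}"
    then show "C #> inv \<one>\<^bsub>G\<lparr>carrier := H\<rparr>\<^esub> = C"
      using D Ps coset_mult_one r_coset_subset_G by auto
  next
    fix x y C assume "x \<in> carrier (G\<lparr>carrier := H\<rparr>)" "y \<in> carrier (G\<lparr>carrier := H\<rparr>)"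
      and "C \<in> {P #> d | d. d \<in> D}"
    then obtain d where "x \<in> carrier G" "y \<in> carrier G" "d \<in> carrier G" "C = P #> d"
      using Hc D by auto
    then show "C #> inv (x \<otimes>\<^bsub>G\<lparr>carrier := H\<rparr>\<^esub> y) = C #> inv y #> inv x"
      using coset_mult_assoc[OF r_coset_subset_G[OF Ps]] by (simp add: inv_mult_group)
  qed
qed

text \<open>If \<open>P\<close> normalizes \<open>D\<close>, right multiplication by \<open>P\<close> permutes the cosets \<open>Pd\<close>, \<open>d \<in> D\<close>,
  since \<open>Pdx\<^sup>-\<^sup>1 = P(xdx\<^sup>-\<^sup>1)\<close> for \<open>x \<in> P\<close>.\<close>

lemma (in group) normalizing_action_on_cosets:
  assumes P: "subgroup P G" and Ds: "D \<subseteq> carrier G"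
    and P_normalizes_D: "\<And>x d. x \<in> P \<Longrightarrow> d \<in> D \<Longrightarrow> x \<otimes> d \<otimes> inv x \<in> D"
  shows "is_action (G\<lparr>carrier := P\<rparr>) {P #> d | d. d \<in> D} (\<lambda>x C. C #> inv x)"
proof (rule right_coset_action[OF P P Ds])
  have Ps: "P \<subseteq> carrier G" using subgroup.subset[OF P] .
  fix x d assume x: "x \<in> P" and d: "d \<in> D"
  have xc: "x \<in> carrier G" and dc: "d \<in> carrier G" using x d Ps Ds by auto
  have "x \<otimes> d \<otimes> inv x \<in> P #> (d \<otimes> inv x)"
    using rcosI[OF x Ps, of "d \<otimes> inv x"] xc dc by (simp add: m_assoc)
  then have "P #> (d \<otimes> inv x) = P #> (x \<otimes> d \<otimes> inv x)"
    using repr_independence[OF _ _ P] xc dc by simp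
  then show "P #> (d \<otimes> inv x) \<in> {P #> d | d. d \<in> D}"
    using P_normalizes_D[OF x d] by auto
qed

lemma (in group) transitive_action_on_cosets:
  assumes P: "subgroup P G" and D: "subgroup D G"
  shows "is_action (G\<lparr>carrier := D\<rparr>) {P #> d | d. d \<in> D} (\<lambda>x C. C #> inv x)"
    and "orbit_of (G\<lparr>carrier := D\<rparr>) (\<lambda>x C. C #> inv x) P = {P #> d | d. d \<in> D}"
proof -
  have Ps: "P \<subseteq> carrier G" and Ds: "D \<subseteq> carrier G"
    using subgroup.subset[OF P] subgroup.subset[OF D] .
  show act: "is_action (G\<lparr>carrier := D\<rparr>) {P #> d | d. d \<in> D} (\<lambda>x C. C #> inv x)"
    by (rule right_coset_action[OF P D Ds])
      (use subgroup.m_closed[OF D] subgroup.m_inv_closed[OF D] in blast)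
  have PE: "P \<in> {P #> d | d. d \<in> D}"
    using subgroup.one_closed[OF D] coset_mult_one[OF Ps] by force
  show "orbit_of (G\<lparr>carrier := D\<rparr>) (\<lambda>x C. C #> inv x) P = {P #> d | d. d \<in> D}"
  proof (intro equalityI subsetI)
    fix C assume "C \<in> {P #> d | d. d \<in> D}"
    then obtain d where d: "d \<in> D" "C = P #> d" by auto
    then have "P #> inv (inv d) = C" using Ds by auto
    then show "C \<in> orbit_of (G\<lparr>carrier := D\<rparr>) (\<lambda>x C. C #> inv x) P"
      using subgroup.m_inv_closed[OF D d(1)] unfolding orbit_of_def by force
  qed (use act PE in \<open>auto simp: orbit_of_def is_action_def\<close>)
qed

text \<open>Both \<open>P\<close> and \<open>D\<close> act on
  the set \<open>E\<close> of cosets \<open>Pd\<close>, \<open>d \<in> D\<close>: the only fixed point of \<open>P\<close> is \<open>P\<close> itself, so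
  \<open>|E| \<equiv> 1 (mod p)\<close>; the action of \<open>D\<close> is transitive, so \<open>|E|\<close> is a power of \<open>p\<close>.  Hence \<open>E = {P}\<close>.\<close>

lemma normalizers_grow:
  fixes G (structure)
  assumes G: "finite_p_group p G" and P: "subgroup P G" and D: "subgroup D G"
    and P_normalizes_D: "\<And>x d. x \<in> P \<Longrightarrow> d \<in> D \<Longrightarrow> x \<otimes> d \<otimes> inv x \<in> D"
    and N_D_P: "\<And>d. d \<in> D \<Longrightarrow> d \<in> normalizer G P \<Longrightarrow> d \<in> P"
  shows "D \<subseteq> P"
proof -
  interpret group G using G by (simp add: finite_p_group_def)
  have fin: "finite (carrier G)" and p: "Factorial_Ring.prime p"
    using G by (auto simp: finite_p_group_def)
  have Ps: "P \<subseteq> carrier G" and Ds: "D \<subseteq> carrier G"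
    using subgroup.subset[OF P] subgroup.subset[OF D] .
  define E where "E = {P #> d | d. d \<in> D}"
  have finE: "finite E"
  proof -
    have "E \<subseteq> Pow (carrier G)" unfolding E_def using Ps Ds r_coset_subset_G by blast
    then show ?thesis using fin finite_subset by blast
  qed
  have PE: "P \<in> E"
    unfolding E_def using subgroup.one_closed[OF D] coset_mult_one[OF Ps] by force
  have "card E mod p = card {C\<in>E. \<forall>x\<in>P. C #> inv x = C} mod p"
    using fixed_points_congruence[OF finite_p_group_subgroup[OF G P]
        normalizing_action_on_cosets[OF P Ds P_normalizes_D] finE[unfolded E_def]]
    unfolding E_def by simp
  then have mod_p: "card E mod p = 1"
    using P_fixed_coset[OF fin P D N_D_P] prime_gt_1_nat[OF p] unfolding E_def by simp
  have "\<exists>k. card (orbit_of (G\<lparr>carrier := D\<rparr>) (\<lambda>x C. C #> inv x) P) = p ^ k"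
    by (rule orbit_card_prime_power[OF finite_p_group_subgroup[OF G D]
          transitive_action_on_cosets(1)[OF P D] PE[unfolded E_def]])
  then obtain k where "card E = p ^ k"
    unfolding transitive_action_on_cosets(2)[OF P D] E_def by blast
  then have "card E = 1" using mod_p by (cases k) auto
  then have "E = {P}" using PE by (metis card_1_singletonE singletonD)
  then show "D \<subseteq> P"
    unfolding E_def using coset_join1[OF _ _ P] Ds by blast
qed

section \<open>Saturated fusion systems\<close>

locale saturated_fusion_system =
  fixes p :: nat and G :: "('a, 'b) monoid_scheme" (structure)
    and F :: "'a set \<Rightarrow> 'a set \<Rightarrow> ('a \<Rightarrow> 'a) set"
  assumes saturated: "saturated p G F"
begin

lemma fusion_system: "fusion_system p G F"
  using saturated unfolding saturated_def by blast

lemma p_group: "finite_p_group p G"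
  using fusion_system unfolding fusion_system_def by blast

sublocale group G
  using p_group by (simp add: finite_p_group_def)

lemma finite_carrier: "finite (carrier G)"
  using p_group by (simp add: finite_p_group_def)

lemmas fusion_axioms = fusion_system[unfolded fusion_system_def, THEN conjunct2]
lemmas saturation_axioms = saturated[unfolded saturated_def, THEN conjunct2]

lemma F_subgroups: "\<phi> \<in> F U V \<Longrightarrow> subgroup U G \<and> subgroup V G"
  using fusion_axioms[THEN conjunct1] by blast

lemma F_inj_hom: "\<phi> \<in> F U V \<Longrightarrow> \<phi> \<in> inj_homs G U V"
  using fusion_axioms[THEN conjunct2, THEN conjunct1] by blast

lemma F_ext: "\<phi> \<in> F U V \<Longrightarrow> \<phi> \<in> extensional U"
  and F_img: "\<phi> \<in> F U V \<Longrightarrow> \<phi> ` U \<subseteq> V"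
  and F_inj: "\<phi> \<in> F U V \<Longrightarrow> inj_on \<phi> U"
  and F_hom: "\<phi> \<in> F U V \<Longrightarrow> x \<in> U \<Longrightarrow> y \<in> U \<Longrightarrow> \<phi> (x \<otimes> y) = \<phi> x \<otimes> \<phi> y"
  using F_inj_hom unfolding inj_homs_def by blast+

lemma F_comp: "\<phi> \<in> F U V \<Longrightarrow> \<psi> \<in> F V W \<Longrightarrow> (\<lambda>x \<in> U. \<psi> (\<phi> x)) \<in> F U W"
  using fusion_axioms[THEN conjunct2, THEN conjunct2, THEN conjunct1] by blast

lemma F_conj: "subgroup U G \<Longrightarrow> subgroup V G \<Longrightarrow> g \<in> carrier G \<Longrightarrow> conjmap G g U ` U \<subseteq> V
   \<Longrightarrow> conjmap G g U \<in> F U V"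
  using fusion_axioms[THEN conjunct2, THEN conjunct2, THEN conjunct2, THEN conjunct1] by blast

lemma F_onto_image: "\<phi> \<in> F U V \<Longrightarrow> \<phi> \<in> F U (\<phi> ` U)"
  and F_inverse_in: "\<phi> \<in> F U V \<Longrightarrow> (\<lambda>y \<in> \<phi> ` U. the_inv_into U \<phi> y) \<in> F (\<phi> ` U) U"
  using fusion_axioms[THEN conjunct2, THEN conjunct2, THEN conjunct2, THEN conjunct2] by blast+

lemma fully_normalized_imp_centralized: "fully_normalized G F U \<Longrightarrow> fully_centralized G F U"
  and fully_normalized_sylow: "fully_normalized G F U \<Longrightarrow> sylow_in p (AutS G U) (AutF F U)"
  using saturation_axioms[THEN conjunct1] by blast+

lemma extension_axiom:
  "subgroup V G \<Longrightarrow> \<phi> \<in> F V (carrier G) \<Longrightarrow> fully_centralized G F (\<phi> ` V) \<Longrightarrow>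
   \<exists>\<psi>\<in>F (N_phi G V \<phi>) (carrier G). \<forall>x\<in>V. \<psi> x = \<phi> x"
  using saturation_axioms[THEN conjunct2] by blast

lemma F_val: "\<phi> \<in> F U V \<Longrightarrow> x \<in> U \<Longrightarrow> \<phi> x \<in> V"
  using F_img by blast

lemma F_val_carrier: "\<phi> \<in> F U V \<Longrightarrow> x \<in> U \<Longrightarrow> \<phi> x \<in> carrier G"
  using F_val F_subgroups subgroup.mem_carrier by meson

lemma F_image_subgroup: "\<phi> \<in> F U V \<Longrightarrow> subgroup (\<phi> ` U) G"
  using F_onto_image F_subgroups by blast

text \<open>Inclusions are morphisms (they are conjugation by \<open>1\<close>).\<close>

lemma F_incl: "subgroup U G \<Longrightarrow> subgroup V G \<Longrightarrow> U \<subseteq> V \<Longrightarrow> (\<lambda>x\<in>U. x) \<in> F U V"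
proof -
  assume U: "subgroup U G" and "subgroup V G" "U \<subseteq> V"
  moreover have "conjmap G \<one> U = (\<lambda>x\<in>U. x)"
    using subgroup.mem_carrier[OF U] by (auto simp: conjmap_def fun_eq_iff)
  ultimately show ?thesis
    using F_conj[of U V \<one>] by auto
qed

lemma F_widen:
  assumes "\<phi> \<in> F U V" "subgroup W G" "\<phi> ` U \<subseteq> W"
  shows "\<phi> \<in> F U W"
proof -
  have "(\<lambda>x\<in>U. (\<lambda>y\<in>\<phi> ` U. y) (\<phi> x)) \<in> F U W"
    using F_comp[OF F_onto_image[OF assms(1)] F_incl[OF F_image_subgroup[OF assms(1)] assms(2,3)]] .
  moreover have "(\<lambda>x\<in>U. (\<lambda>y\<in>\<phi> ` U. y) (\<phi> x)) = \<phi>"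
    using F_ext[OF assms(1)] by (auto simp: fun_eq_iff extensional_def)
  ultimately show ?thesis by simp
qed

lemma F_restrict:
  assumes "\<phi> \<in> F U V" "subgroup U1 G" "U1 \<subseteq> U"
  shows "restrict \<phi> U1 \<in> F U1 V"
proof -
  have "(\<lambda>x\<in>U1. \<phi> ((\<lambda>x\<in>U1. x) x)) \<in> F U1 V"
    using F_comp[OF F_incl[OF assms(2) conjunct1[OF F_subgroups[OF assms(1)]] assms(3)] assms(1)] .
  moreover have "(\<lambda>x\<in>U1. \<phi> ((\<lambda>x\<in>U1. x) x)) = restrict \<phi> U1"
    by (auto simp: fun_eq_iff)
  ultimately show ?thesis by simp
qed

lemma F_inv:
  assumes \<phi>: "\<phi> \<in> F U V" and x: "x \<in> U"
  shows "\<phi> (inv x) = inv (\<phi> x)"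
proof -
  have U: "subgroup U G" using F_subgroups[OF \<phi>] by blast
  have ix: "inv x \<in> U" using subgroup.m_inv_closed[OF U x] .
  have one: "\<phi> \<one> = \<one>"
  proof -
    have c: "\<phi> \<one> \<in> carrier G" using F_val_carrier[OF \<phi> subgroup.one_closed[OF U]] .
    have "\<phi> \<one> \<otimes> \<phi> \<one> = \<phi> \<one> \<otimes> \<one>"
      using F_hom[OF \<phi> subgroup.one_closed[OF U] subgroup.one_closed[OF U]] c by simp
    then show ?thesis using c by simp
  qed
  have "\<phi> (inv x) \<otimes> \<phi> x = \<one>"
    using F_hom[OF \<phi> ix x] one subgroup.mem_carrier[OF U x] by simp
  then show ?thesis
    using inv_equality F_val_carrier[OF \<phi> ix] F_val_carrier[OF \<phi> x] by metis
qed

lemma F_inverse: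
  assumes "\<phi> \<in> F U V"
  shows "(\<lambda>y \<in> \<phi> ` U. the_inv_into U \<phi> y) \<in> F (\<phi> ` U) (carrier G)"
    and "(\<lambda>y \<in> \<phi> ` U. the_inv_into U \<phi> y) ` (\<phi> ` U) = U"
proof -
  have U: "subgroup U G" using F_subgroups[OF assms(1)] by blast
  show img: "(\<lambda>y \<in> \<phi> ` U. the_inv_into U \<phi> y) ` (\<phi> ` U) = U"
    using the_inv_into_onto[OF F_inj[OF assms]] by simp
  then show "(\<lambda>y \<in> \<phi> ` U. the_inv_into U \<phi> y) \<in> F (\<phi> ` U) (carrier G)"
    using F_widen[OF F_inverse_in[OF assms] subgroup_self] U subgroup.subset by metis
qed

lemma F_conjugates_trans:
  assumes "R \<in> F_conjugates G F Q" "R' \<in> F_conjugates G F R"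
  shows "R' \<in> F_conjugates G F Q"
proof -
  obtain \<phi> where \<phi>: "\<phi> \<in> F Q (carrier G)" "R = \<phi> ` Q"
    using assms(1) unfolding F_conjugates_def by auto
  obtain \<psi> where \<psi>: "\<psi> \<in> F R (carrier G)" "R' = \<psi> ` R"
    using assms(2) unfolding F_conjugates_def by auto
  have "(\<lambda>x\<in>Q. \<psi> (\<phi> x)) \<in> F Q (carrier G)"
    using F_comp[OF F_onto_image[OF \<phi>(1)]] \<phi>(2) \<psi>(1) by simp
  moreover have "(\<lambda>x\<in>Q. \<psi> (\<phi> x)) ` Q = R'"
    using \<phi>(2) \<psi>(2) by (auto simp: image_iff)
  ultimately show ?thesis unfolding F_conjugates_def by blast
qed

lemma F_conjugates_sym:
  assumes "R \<in> F_conjugates G F Q"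
  shows "Q \<in> F_conjugates G F R"
proof -
  obtain \<phi> where \<phi>: "\<phi> \<in> F Q (carrier G)" "R = \<phi> ` Q"
    using assms(1) unfolding F_conjugates_def by auto
  show ?thesis using F_inverse[OF \<phi>(1)] \<phi>(2) unfolding F_conjugates_def by blast
qed

definition AG :: "'a set \<Rightarrow> ('a \<Rightarrow> 'a) monoid" where
  "AG U = \<lparr>carrier = F U U, monoid.mult = (\<lambda>a b. \<lambda>x\<in>U. a (b x)), one = (\<lambda>x\<in>U. x)\<rparr>"

lemma AG_carrier [simp]: "carrier (AG U) = F U U"
  and AG_mult [simp]: "a \<otimes>\<^bsub>AG U\<^esub> b = (\<lambda>x\<in>U. a (b x))"
  and AG_one [simp]: "\<one>\<^bsub>AG U\<^esub> = (\<lambda>x\<in>U. x)"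
  by (simp_all add: AG_def)

text \<open>\<open>U\<close> is finite, so an injective endomorphism of \<open>U\<close> is onto.\<close>

lemma aut_surj: assumes "a \<in> F U U" shows "a ` U = U"
proof -
  have U: "subgroup U G" using F_subgroups[OF assms] by blast
  have "finite U" using finite_carrier subgroup.subset[OF U] finite_subset by blast
  moreover have "card (a ` U) = card U" using card_image[OF F_inj[OF assms]] .
  ultimately show ?thesis using card_subset_eq F_img[OF assms] by metis
qed

text \<open>\<open>Aut\<^sub>\<F>(U)\<close> is a group: inverses come from the factorization axiom.\<close>

lemma AG_group: assumes U: "subgroup U G" shows "group (AG U)"
proof (rule groupI)
  fix a b assume "a \<in> carrier (AG U)" "b \<in> carrier (AG U)"
  then show "a \<otimes>\<^bsub>AG U\<^esub> b \<in> carrier (AG U)" using F_comp by simp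
next
  show "\<one>\<^bsub>AG U\<^esub> \<in> carrier (AG U)" using F_incl[OF U U] by simp
next
  fix a b c assume "a \<in> carrier (AG U)" "b \<in> carrier (AG U)" "c \<in> carrier (AG U)"
  then show "a \<otimes>\<^bsub>AG U\<^esub> b \<otimes>\<^bsub>AG U\<^esub> c = a \<otimes>\<^bsub>AG U\<^esub> (b \<otimes>\<^bsub>AG U\<^esub> c)"
    using F_val by (auto simp: fun_eq_iff)
next
  fix a assume "a \<in> carrier (AG U)"
  then have a: "a \<in> F U U" by simp
  show "\<one>\<^bsub>AG U\<^esub> \<otimes>\<^bsub>AG U\<^esub> a = a"
    using F_val[OF a] F_ext[OF a] by (auto simp: fun_eq_iff extensional_def)
  have "(\<lambda>y \<in> a ` U. the_inv_into U a y) \<in> F U U"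
    using F_inverse_in[OF a] aut_surj[OF a] by simp
  moreover have "(\<lambda>y \<in> a ` U. the_inv_into U a y) \<otimes>\<^bsub>AG U\<^esub> a = \<one>\<^bsub>AG U\<^esub>"
    using the_inv_into_f_f[OF F_inj[OF a]] by (auto simp: fun_eq_iff)
  ultimately show "\<exists>y\<in>carrier (AG U). y \<otimes>\<^bsub>AG U\<^esub> a = \<one>\<^bsub>AG U\<^esub>" by (intro bexI) auto
qed

lemma AG_inv_apply:
  assumes U: "subgroup U G" and a: "a \<in> F U U" and x: "x \<in> U"
  shows "(inv\<^bsub>AG U\<^esub> a) (a x) = x"
proof -
  interpret A: group "AG U" using AG_group[OF U] .
  have "(inv\<^bsub>AG U\<^esub> a \<otimes>\<^bsub>AG U\<^esub> a) x = x" using A.l_inv a x by simp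
  then show ?thesis using x by simp
qed

lemma finite_AutF: assumes U: "subgroup U G" shows "finite (F U U)"
proof -
  have finU: "finite U" using finite_carrier subgroup.subset[OF U] finite_subset by blast
  have "F U U \<subseteq> PiE U (\<lambda>_. U)"
    using F_ext F_val by (auto simp: PiE_def)
  then show ?thesis using finite_PiE[OF finU, of "\<lambda>_. U"] finU finite_subset by blast
qed

lemma conjmap_in_AutF:
  assumes U: "subgroup U G" and g: "g \<in> normalizer G U"
  shows "conjmap G g U \<in> F U U"
proof -
  have Us: "U \<subseteq> carrier G" using subgroup.subset[OF U] .
  show ?thesis
    by (rule F_conj[OF U U normalizer_carrier[OF Us g]])
      (auto simp: conjmap_def normalizer_conj[OF Us g])
qed

lemma conjmap_mult:
  assumes U: "subgroup U G" and g: "g \<in> normalizer G U" and h: "h \<in> normalizer G U"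
  shows "conjmap G g U \<otimes>\<^bsub>AG U\<^esub> conjmap G h U = conjmap G (g \<otimes> h) U"
proof (rule ext)
  fix x
  have Us: "U \<subseteq> carrier G" using subgroup.subset[OF U] .
  show "(conjmap G g U \<otimes>\<^bsub>AG U\<^esub> conjmap G h U) x = conjmap G (g \<otimes> h) U x"
  proof (cases "x \<in> U")
    case True
    then have "h \<otimes> x \<otimes> inv h \<in> U" using normalizer_conj[OF Us h] by blast
    then show ?thesis
      using True conj_conj[OF normalizer_carrier[OF Us g] normalizer_carrier[OF Us h]] Us
      by (auto simp: conjmap_def)
  qed (simp add: conjmap_def)
qed

lemma AutS_subgroup:
  assumes U: "subgroup U G"
  shows "subgroup (AutS G U) (AG U)"
proof -
  interpret A: group "AG U" using AG_group[OF U] .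
  have Us: "U \<subseteq> carrier G" using subgroup.subset[OF U] .
  have NU: "subgroup (normalizer G U) G" using normalizer_imp_subgroup[OF Us] .
  show ?thesis
  proof (rule A.subgroupI)
    show "AutS G U \<subseteq> carrier (AG U)" unfolding AutS_def using conjmap_in_AutF[OF U] by auto
    show "AutS G U \<noteq> {}" unfolding AutS_def using subgroup.one_closed[OF NU] by auto
  next
    fix a assume "a \<in> AutS G U"
    then obtain g where g: "g \<in> normalizer G U" "a = conjmap G g U" unfolding AutS_def by auto
    have ig: "inv g \<in> normalizer G U" using subgroup.m_inv_closed[OF NU g(1)] .
    have "conjmap G (inv g) U \<otimes>\<^bsub>AG U\<^esub> a = \<one>\<^bsub>AG U\<^esub>"
      using conjmap_mult[OF U ig g(1)] g normalizer_carrier[OF Us g(1)] subgroup.mem_carrier[OF U]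
      by (auto simp: conjmap_def fun_eq_iff)
    then have "inv\<^bsub>AG U\<^esub> a = conjmap G (inv g) U"
      using A.inv_equality conjmap_in_AutF[OF U ig] conjmap_in_AutF[OF U g(1)] g(2) by simp
    then show "inv\<^bsub>AG U\<^esub> a \<in> AutS G U" unfolding AutS_def using ig by auto
  next
    fix a b assume "a \<in> AutS G U" "b \<in> AutS G U"
    then obtain g h where g: "g \<in> normalizer G U" "a = conjmap G g U"
      and h: "h \<in> normalizer G U" "b = conjmap G h U" unfolding AutS_def by auto
    then show "a \<otimes>\<^bsub>AG U\<^esub> b \<in> AutS G U"
      unfolding AutS_def using conjmap_mult[OF U g(1) h(1)] subgroup.m_closed[OF NU g(1) h(1)]
      by auto
  qed
qed

subsection \<open>Extending isomorphisms onto fully normalized subgroups\<close>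

definition conj_transport :: "('a \<Rightarrow> 'a) \<Rightarrow> 'a set \<Rightarrow> 'a \<Rightarrow> 'a \<Rightarrow> 'a" where
  "conj_transport \<chi> V g = (\<lambda>x \<in> \<chi> ` V. \<chi> (g \<otimes> the_inv_into V \<chi> x \<otimes> inv g))"

lemma conj_transport_apply:
  assumes "\<chi> \<in> F V W" "y \<in> V"
  shows "conj_transport \<chi> V g (\<chi> y) = \<chi> (g \<otimes> y \<otimes> inv g)"
  using assms the_inv_into_f_f[OF F_inj[OF assms(1)]] by (simp add: conj_transport_def)

text \<open>For \<open>g \<in> N\<^sub>S(V)\<close> it is the composite \<open>\<chi> c\<^sub>g \<chi>\<^sup>-\<^sup>1\<close>, an element of \<open>Aut\<^sub>\<F>(\<chi>(V))\<close>.\<close>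

lemma conj_transport_in_AutF:
  assumes \<chi>: "\<chi> \<in> F V W" and g: "g \<in> normalizer G V"
  shows "conj_transport \<chi> V g \<in> F (\<chi> ` V) (\<chi> ` V)"
proof -
  define \<chi>' where "\<chi>' = (\<lambda>y \<in> \<chi> ` V. the_inv_into V \<chi> y)"
  have V: "subgroup V G" using F_subgroups[OF \<chi>] by blast
  have "(\<lambda>x \<in> \<chi> ` V. (\<lambda>z \<in> V. \<chi> (conjmap G g V z)) (\<chi>' x)) \<in> F (\<chi> ` V) (\<chi> ` V)"
    unfolding \<chi>'_def
    by (rule F_comp[OF F_inverse_in[OF \<chi>] F_comp[OF conjmap_in_AutF[OF V g] F_onto_image[OF \<chi>]]])
  moreover have "the_inv_into V \<chi> x \<in> V" if "x \<in> \<chi> ` V" for x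
    using that the_inv_into_f_f[OF F_inj[OF \<chi>]] by auto
  ultimately show ?thesis
    by (auto simp: conj_transport_def conjmap_def \<chi>'_def fun_eq_iff cong: restrict_cong)
qed

lemma conj_transport_hom:
  assumes \<chi>: "\<chi> \<in> F V W"
  shows "conj_transport \<chi> V \<in> hom (G\<lparr>carrier := normalizer G V\<rparr>) (AG (\<chi> ` V))"
proof (rule homI)
  have Vs: "V \<subseteq> carrier G" using subgroup.subset F_subgroups[OF \<chi>] by blast
  show "conj_transport \<chi> V g \<in> carrier (AG (\<chi> ` V))"
    if "g \<in> carrier (G\<lparr>carrier := normalizer G V\<rparr>)" for g
    using conj_transport_in_AutF[OF \<chi>] that by simp
  fix g h assume "g \<in> carrier (G\<lparr>carrier := normalizer G V\<rparr>)" "h \<in> carrier (G\<lparr>carrier := normalizer G V\<rparr>)"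
  then have g: "g \<in> normalizer G V" and h: "h \<in> normalizer G V" by simp_all
  show "conj_transport \<chi> V (g \<otimes>\<^bsub>G\<lparr>carrier := normalizer G V\<rparr>\<^esub> h)
      = conj_transport \<chi> V g \<otimes>\<^bsub>AG (\<chi> ` V)\<^esub> conj_transport \<chi> V h"
  proof (rule ext)
    fix x
    show "conj_transport \<chi> V (g \<otimes>\<^bsub>G\<lparr>carrier := normalizer G V\<rparr>\<^esub> h) x
      = (conj_transport \<chi> V g \<otimes>\<^bsub>AG (\<chi> ` V)\<^esub> conj_transport \<chi> V h) x"
    proof (cases "x \<in> \<chi> ` V")
      case True
      then obtain y where y: "y \<in> V" "x = \<chi> y" by auto
      have hy: "h \<otimes> y \<otimes> inv h \<in> V" using normalizer_conj[OF Vs h y(1)] .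
      have "(conj_transport \<chi> V g \<otimes>\<^bsub>AG (\<chi> ` V)\<^esub> conj_transport \<chi> V h) x
          = \<chi> (g \<otimes> (h \<otimes> y \<otimes> inv h) \<otimes> inv g)"
        using y hy by (simp add: conj_transport_apply[OF \<chi>])
      also have "\<dots> = \<chi> ((g \<otimes> h) \<otimes> y \<otimes> inv (g \<otimes> h))"
        using conj_conj normalizer_carrier[OF Vs g] normalizer_carrier[OF Vs h] y Vs by auto
      finally show ?thesis
        using y by (simp add: conj_transport_apply[OF \<chi>])
    qed (simp add: conj_transport_def)
  qed
qed

lemma N_phi_twisted:
  assumes U: "subgroup U G" and \<chi>: "\<chi> \<in> F V U" and img: "\<chi> ` V = U" and \<beta>: "\<beta> \<in> F U U"
    and conj: "\<And>g. g \<in> normalizer G V \<Longrightarrow>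
      \<beta> \<otimes>\<^bsub>AG U\<^esub> conj_transport \<chi> V g \<otimes>\<^bsub>AG U\<^esub> inv\<^bsub>AG U\<^esub> \<beta> \<in> AutS G U"
  shows "N_phi G V (\<lambda>v\<in>V. \<beta> (\<chi> v)) = normalizer G V"
proof
  define \<psi> where "\<psi> = (\<lambda>v\<in>V. \<beta> (\<chi> v))"
  have Vs: "V \<subseteq> carrier G" using subgroup.subset F_subgroups[OF \<chi>] by blast
  have \<psi>_img: "\<psi> ` V = U"
    using img aut_surj[OF \<beta>] unfolding \<psi>_def by (auto simp: image_iff)
  show "N_phi G V \<psi> \<subseteq> normalizer G V" unfolding N_phi_def by auto
  show "normalizer G V \<subseteq> N_phi G V \<psi>"
  proof
    fix g assume g: "g \<in> normalizer G V"
    obtain h where h: "h \<in> normalizer G U"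
      and hq: "\<beta> \<otimes>\<^bsub>AG U\<^esub> conj_transport \<chi> V g \<otimes>\<^bsub>AG U\<^esub> inv\<^bsub>AG U\<^esub> \<beta> = conjmap G h U"
      using conj[OF g] unfolding AutS_def by auto
    have "\<psi> (g \<otimes> y \<otimes> inv g) = h \<otimes> \<psi> y \<otimes> inv h" if y: "y \<in> V" for y
    proof -
      have \<chi>y: "\<chi> y \<in> U" using F_val[OF \<chi> y] .
      have \<psi>y: "\<psi> y = \<beta> (\<chi> y)" "\<psi> y \<in> U" using y \<beta> \<chi>y F_val unfolding \<psi>_def by auto
      have "\<psi> (g \<otimes> y \<otimes> inv g) = \<beta> (conj_transport \<chi> V g (\<chi> y))"
        using normalizer_conj[OF Vs g y] conj_transport_apply[OF \<chi> y] unfolding \<psi>_def by simp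
      also have "\<dots> = (\<beta> \<otimes>\<^bsub>AG U\<^esub> conj_transport \<chi> V g \<otimes>\<^bsub>AG U\<^esub> inv\<^bsub>AG U\<^esub> \<beta>) (\<psi> y)"
        using \<psi>y AG_inv_apply[OF U \<beta> \<chi>y] \<chi>y by simp
      also have "\<dots> = h \<otimes> \<psi> y \<otimes> inv h"
        using hq \<psi>y(2) by (simp add: conjmap_def)
      finally show ?thesis .
    qed
    then show "g \<in> N_phi G V \<psi>"
      using g h \<psi>_img unfolding N_phi_def by blast
  qed
qed

text \<open>By Sylow's
  theorem in \<open>Aut\<^sub>\<F>(U)\<close> some \<open>\<beta>\<close> conjugates the image of \<open>N\<^sub>S(V)\<close> into \<open>Aut\<^sub>S(U)\<close>; then
  \<open>N\<^bsub>\<beta>\<chi>\<^esub> = N\<^sub>S(V)\<close> and the extension axiom applies to \<open>\<beta>\<chi>\<close>.\<close>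

lemma extension_to_normalizer:
  assumes fn: "fully_normalized G F U" and \<chi>: "\<chi> \<in> F V (carrier G)" and img: "\<chi> ` V = U"
  shows "\<exists>\<alpha> \<in> F (normalizer G V) (carrier G). \<alpha> ` V = U"
proof -
  have U: "subgroup U G" using fn unfolding fully_normalized_def by blast
  have V: "subgroup V G" using F_subgroups[OF \<chi>] by blast
  have \<chi>U: "\<chi> \<in> F V U" using F_onto_image[OF \<chi>] img by simp
  have sylow: "card (AutS G U) = p ^ multiplicity p (order (AG U))"
    using fully_normalized_sylow[OF fn] unfolding sylow_in_def AutF_def order_def by simp
  have hom: "conj_transport \<chi> V \<in> hom (G\<lparr>carrier := normalizer G V\<rparr>) (AG U)"
    using conj_transport_hom[OF \<chi>] img by simp
  obtain \<beta> where \<beta>: "\<beta> \<in> carrier (AG U)" and conj: "\<forall>g \<in> carrier (G\<lparr>carrier := normalizer G V\<rparr>).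
      \<beta> \<otimes>\<^bsub>AG U\<^esub> conj_transport \<chi> V g \<otimes>\<^bsub>AG U\<^esub> inv\<^bsub>AG U\<^esub> \<beta> \<in> AutS G U"
    using conj_into_sylow[OF finite_p_group_subgroup[OF p_group normalizer_imp_subgroup]
        AG_group[OF U] _ AutS_subgroup[OF U] sylow hom] subgroup.subset[OF V] finite_AutF[OF U]
    by auto
  then have \<beta>: "\<beta> \<in> F U U" by simp
  define \<psi> where "\<psi> = (\<lambda>v\<in>V. \<beta> (\<chi> v))"
  have \<psi>_img: "\<psi> ` V = U"
    using img aut_surj[OF \<beta>] unfolding \<psi>_def by (auto simp: image_iff)
  have "\<psi> \<in> F V (carrier G)"
    using F_widen[OF F_comp[OF \<chi>U \<beta>] subgroup_self] \<psi>_img subgroup.subset[OF U]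
    unfolding \<psi>_def by simp
  then obtain \<alpha> where \<alpha>: "\<alpha> \<in> F (N_phi G V \<psi>) (carrier G)" and agree: "\<forall>x\<in>V. \<alpha> x = \<psi> x"
    using extension_axiom[OF V] fully_normalized_imp_centralized[OF fn] \<psi>_img by auto
  have "\<alpha> ` V = U" using agree \<psi>_img by (auto simp: image_iff)
  then show ?thesis
    using \<alpha> N_phi_twisted[OF U \<chi>U img, of \<beta>] \<beta> conj unfolding \<psi>_def by auto
qed

lemma F_conj_preserved:
  assumes \<alpha>: "\<alpha> \<in> F N W" and x: "x \<in> N" and q: "q \<in> N"
  shows "\<alpha> (x \<otimes> q \<otimes> inv x) = \<alpha> x \<otimes> \<alpha> q \<otimes> inv (\<alpha> x)"
proof -
  have N: "subgroup N G" using F_subgroups[OF \<alpha>] by blast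
  show ?thesis
    using F_hom[OF \<alpha> subgroup.m_closed[OF N x q] subgroup.m_inv_closed[OF N x]]
      F_hom[OF \<alpha> x q] F_inv[OF \<alpha> x] by simp
qed

lemma F_centralizing:
  assumes \<beta>: "\<beta> \<in> F N W" and d: "d \<in> N" and R: "R \<subseteq> N" and dR: "d \<in> centralizer G R"
  shows "\<beta> d \<in> centralizer G (\<beta> ` R)"
  using F_val_carrier[OF \<beta> d] F_hom[OF \<beta> d] F_hom[OF \<beta> _ d] R dR
  by (fastforce simp: centralizer_def)

text \<open>Pulling back along a morphism \<open>\<alpha>\<close>: if \<open>C\<^sub>S(\<alpha>(Q))\<close> lies in \<open>\<alpha>(P)\<close> then it is the image of
  a subset of \<open>C\<^sub>S(Q)\<close>, so it is not larger than \<open>C\<^sub>S(Q)\<close>.\<close>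

lemma card_centralizer_image:
  assumes \<alpha>: "\<alpha> \<in> F N W" and QN: "Q \<subseteq> N" and PN: "P \<subseteq> N"
    and C: "centralizer G (\<alpha> ` Q) \<subseteq> \<alpha> ` P"
  shows "card (centralizer G (\<alpha> ` Q)) \<le> card (centralizer G Q)"
proof -
  have N: "subgroup N G" using F_subgroups[OF \<alpha>] by blast
  have "centralizer G (\<alpha> ` Q) \<subseteq> \<alpha> ` centralizer G Q"
  proof
    fix c assume c: "c \<in> centralizer G (\<alpha> ` Q)"
    then obtain x where x: "x \<in> P" "c = \<alpha> x" using C by auto
    have xN: "x \<in> N" using x PN by blast
    have "x \<otimes> q = q \<otimes> x" if q: "q \<in> Q" for q
    proof -
      have qN: "q \<in> N" using q QN by blast
      have "\<alpha> (x \<otimes> q) = \<alpha> (q \<otimes> x)"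
        using F_hom[OF \<alpha> xN qN] F_hom[OF \<alpha> qN xN] c x(2) q by (auto simp: centralizer_def)
      then show ?thesis
        using inj_onD[OF F_inj[OF \<alpha>]] subgroup.m_closed[OF N xN qN] subgroup.m_closed[OF N qN xN]
        by blast
    qed
    then have "x \<in> centralizer G Q"
      using subgroup.mem_carrier[OF N xN] by (auto simp: centralizer_def)
    then show "c \<in> \<alpha> ` centralizer G Q" using x by blast
  qed
  moreover have "finite (centralizer G Q)"
    using finite_carrier by (auto simp: centralizer_def)
  ultimately show ?thesis
    by (meson card_image_le card_mono finite_imageI le_trans)
qed

lemma F_image_normalizes:
  assumes \<alpha>: "\<alpha> \<in> F N W" and P: "subgroup P G" "P \<subseteq> N" and QN: "Q \<subseteq> N"
    and normal: "\<And>a q. a \<in> P \<Longrightarrow> q \<in> Q \<Longrightarrow> a \<otimes> q \<otimes> inv a \<in> Q"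
    and x: "x \<in> \<alpha> ` P" and r: "r \<in> \<alpha> ` Q"
  shows "inv x \<otimes> r \<otimes> x \<in> \<alpha> ` Q"
proof -
  obtain b q where b: "b \<in> P" "x = \<alpha> b" and q: "q \<in> Q" "r = \<alpha> q"
    using x r by auto
  define a where "a = inv b"
  have a: "a \<in> P" "\<alpha> a = inv x"
    using subgroup.m_inv_closed[OF P(1) b(1)] F_inv[OF \<alpha>] b P(2) unfolding a_def by auto
  have "\<alpha> (a \<otimes> q \<otimes> inv a) = \<alpha> a \<otimes> \<alpha> q \<otimes> inv (\<alpha> a)"
    using F_conj_preserved[OF \<alpha>] a(1) q(1) P(2) QN by blast
  also have "\<dots> = inv x \<otimes> r \<otimes> x"
  proof -
    have "x \<in> carrier G" using b F_val_carrier[OF \<alpha>] P(2) by blast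
    then show ?thesis using a(2) q(2) by simp
  qed
  finally show ?thesis
    using normal[OF a(1) q(1)] by (metis image_eqI)
qed

lemma composite_in_AutF:
  assumes \<alpha>: "\<alpha> \<in> F N W" and P: "subgroup P G" "P \<subseteq> N"
    and \<beta>: "\<beta> \<in> F M W'" and PM: "\<alpha> ` P \<subseteq> M" and onto: "\<beta> ` \<alpha> ` P = P"
  shows "(\<lambda>x\<in>P. \<beta> (\<alpha> x)) \<in> AutF F P"
proof -
  have \<alpha>P: "restrict \<alpha> P \<in> F P W" using F_restrict[OF \<alpha> P] .
  have "restrict \<alpha> P \<in> F P (\<alpha> ` P)"
    using F_onto_image[OF \<alpha>P] by simp
  moreover have "restrict \<beta> (\<alpha> ` P) \<in> F (\<alpha> ` P) P"
    using F_onto_image[OF F_restrict[OF \<beta> _ PM]] F_image_subgroup[OF \<alpha>P] onto by simp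
  ultimately have "(\<lambda>x\<in>P. restrict \<beta> (\<alpha> ` P) (restrict \<alpha> P x)) \<in> F P P"
    by (rule F_comp)
  moreover have "(\<lambda>x\<in>P. restrict \<beta> (\<alpha> ` P) (restrict \<alpha> P x)) = (\<lambda>x\<in>P. \<beta> (\<alpha> x))"
    by (auto simp: fun_eq_iff)
  ultimately show ?thesis unfolding AutF_def by simp
qed

text \<open>Let \<open>\<alpha> \<in> F(N\<^sub>S(Q), S)\<close> and \<open>P' = \<alpha>(P)\<close>.  An extension
  \<open>\<beta> \<in> F(N\<^sub>S(P'), S)\<close> with \<open>\<beta>(P') = P\<close> makes \<open>\<xi> = \<beta>\<alpha>|\<^sub>P\<close> an automorphism of \<open>P\<close>, so
  \<open>C\<^sub>S(\<beta>\<alpha>(Q)) \<le> P\<close>; hence elements of \<open>C\<^sub>S(\<alpha>(Q))\<close> normalizing \<open>P'\<close> lie in \<open>P'\<close>, and since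
  \<open>P'\<close> normalizes \<open>C\<^sub>S(\<alpha>(Q))\<close>, normalizers growing gives \<open>C\<^sub>S(\<alpha>(Q)) \<le> P'\<close>.\<close>

lemma centralizer_inside_image:
  assumes P: "subgroup P G" and fnP: "fully_normalized G F P"
    and QP: "Q \<subseteq> P" and PN: "P \<subseteq> normalizer G Q"
    and hyp: "\<And>\<xi>. \<xi> \<in> AutF F P \<Longrightarrow> centralizer G (\<xi> ` Q) \<subseteq> P"
    and \<alpha>: "\<alpha> \<in> F (normalizer G Q) (carrier G)"
  shows "centralizer G (\<alpha> ` Q) \<subseteq> \<alpha> ` P"
proof -
  define R where "R = \<alpha> ` Q"
  define P' where "P' = \<alpha> ` P"
  have \<alpha>P: "restrict \<alpha> P \<in> F P (carrier G)" and \<alpha>P_img: "restrict \<alpha> P ` P = P'"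
    using F_restrict[OF \<alpha> P PN] unfolding P'_def by auto
  have P': "subgroup P' G" using F_image_subgroup[OF \<alpha>P] \<alpha>P_img by simp
  have P'N: "P' \<subseteq> normalizer G P'" using subgroup_le_normalizer[OF P'] .
  have RP': "R \<subseteq> P'" unfolding R_def P'_def using QP by blast
  then have Rs: "R \<subseteq> carrier G" using subgroup.subset[OF P'] by blast
  have QN: "Q \<subseteq> normalizer G Q" using QP PN by blast
  have Q_normal: "a \<otimes> q \<otimes> inv a \<in> Q" if "a \<in> P" "q \<in> Q" for a q
    using normalizer_conj[OF subset_trans[OF QP subgroup.subset[OF P]]] PN that by blast
  obtain \<beta> where \<beta>: "\<beta> \<in> F (normalizer G P') (carrier G)" and \<beta>_img: "\<beta> ` P' = P"
    using extension_to_normalizer[OF fnP] F_inverse[OF \<alpha>P] \<alpha>P_img by metis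
  have "(\<lambda>x\<in>P. \<beta> (\<alpha> x)) ` Q = \<beta> ` R"
    unfolding R_def using QP by (auto simp: image_iff)
  then have C\<beta>R: "centralizer G (\<beta> ` R) \<subseteq> P"
    using hyp[OF composite_in_AutF[OF \<alpha> P PN \<beta>]] P'N \<beta>_img unfolding P'_def by simp
  have "centralizer G R \<subseteq> P'"
  proof (rule normalizers_grow[OF p_group P' centralizer_subgroup[OF Rs]])
    fix x d assume x: "x \<in> P'" and d: "d \<in> centralizer G R"
    show "x \<otimes> d \<otimes> inv x \<in> centralizer G R"
    proof (rule conj_in_centralizer[OF Rs _ _ d])
      show "x \<in> carrier G" using x subgroup.subset[OF P'] by blast
      show "inv x \<otimes> r \<otimes> x \<in> R" if "r \<in> R" for r
        using F_image_normalizes[OF \<alpha> P PN QN Q_normal] x that unfolding R_def P'_def by blast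
    qed
  next
    fix d assume d: "d \<in> centralizer G R" and dN: "d \<in> normalizer G P'"
    have "\<beta> d \<in> centralizer G (\<beta> ` R)"
      by (rule F_centralizing[OF \<beta> dN _ d]) (use RP' P'N in blast)
    then obtain x where x: "x \<in> P'" "\<beta> d = \<beta> x"
      using C\<beta>R \<beta>_img by blast
    then have "d = x"
      using inj_onD[OF F_inj[OF \<beta>] x(2) dN] P'N by blast
    then show "d \<in> P'" using x(1) by simp
  qed
  then show ?thesis unfolding R_def P'_def .
qed

text \<open>Every subgroup has a fully normalized \<open>\<F>\<close>-conjugate: take one with largest normalizer.\<close>

lemma exists_fully_normalized_conjugate:
  assumes Q: "subgroup Q G"
  shows "\<exists>R \<in> F_conjugates G F Q. fully_normalized G F R"
proof -
  have "(\<lambda>x\<in>Q. x) ` Q = Q" by auto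
  then have "Q \<in> F_conjugates G F Q"
    using F_incl[OF Q subgroup_self subgroup.subset[OF Q]] unfolding F_conjugates_def by blast
  moreover have "card (normalizer G R) < Suc (card (carrier G))" for R
    using card_mono[OF finite_carrier, of "normalizer G R"]
    by (auto simp: normalizer_def stabilizer_def)
  ultimately obtain R where R: "R \<in> F_conjugates G F Q"
    and max: "\<And>R'. R' \<in> F_conjugates G F Q \<Longrightarrow> card (normalizer G R') \<le> card (normalizer G R)"
    using ex_has_greatest_nat[of "\<lambda>R. R \<in> F_conjugates G F Q" Q "\<lambda>R. card (normalizer G R)"]
    by blast
  have "subgroup R G"
    using R F_image_subgroup unfolding F_conjugates_def by blast
  then have "fully_normalized G F R"
    using max F_conjugates_trans[OF R] unfolding fully_normalized_def by blast
  then show ?thesis using R by blast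
qed

lemma fully_centralized_from_conjugate:
  assumes Q: "subgroup Q G" and R: "R \<in> F_conjugates G F Q" and fcR: "fully_centralized G F R"
    and le: "card (centralizer G R) \<le> card (centralizer G Q)"
  shows "fully_centralized G F Q"
  unfolding fully_centralized_def
proof (intro conjI ballI)
  show "subgroup Q G" by (rule Q)
  fix R' assume "R' \<in> F_conjugates G F Q"
  then have "R' \<in> F_conjugates G F R"
    using F_conjugates_trans[OF F_conjugates_sym[OF R]] by blast
  then show "card (centralizer G R') \<le> card (centralizer G Q)"
    using fcR le unfolding fully_centralized_def by fastforce
qed

end

theorem lemma2p5:
  fixes G :: "('a, 'b) monoid_scheme" and F :: "'a set \<Rightarrow> 'a set \<Rightarrow> ('a \<Rightarrow> 'a) set"
    and p :: nat and P Q :: "'a set"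
  assumes "saturated p G F"
    and "subgroup P G"
    and "normal Q (G\<lparr>carrier := P\<rparr>)"
    and "fully_normalized G F P"
    and "\<And>\<xi>. \<xi> \<in> AutF F P \<Longrightarrow> centralizer G (\<xi> ` Q) \<subseteq> P"
  shows "fully_centralized G F Q"
proof -
  interpret saturated_fusion_system p G F by (rule saturated_fusion_system.intro) fact
  have Q: "subgroup Q G" "Q \<subseteq> P" "P \<subseteq> normalizer G Q"
    using normal_in_subgroup[OF assms(2,3)] by auto
  obtain R where R: "R \<in> F_conjugates G F Q" and fnR: "fully_normalized G F R"
    using exists_fully_normalized_conjugate[OF Q(1)] by blast
  then obtain \<chi> where "\<chi> \<in> F Q (carrier G)" "\<chi> ` Q = R"
    unfolding F_conjugates_def by auto
  then obtain \<alpha> where \<alpha>: "\<alpha> \<in> F (normalizer G Q) (carrier G)" and \<alpha>Q: "\<alpha> ` Q = R"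
    using extension_to_normalizer[OF fnR] by blast
  have "centralizer G R \<subseteq> \<alpha> ` P"
    using centralizer_inside_image[OF assms(2,4) Q(2,3) assms(5) \<alpha>] \<alpha>Q by simp
  then have "card (centralizer G R) \<le> card (centralizer G Q)"
    using card_centralizer_image[OF \<alpha> subgroup_le_normalizer[OF Q(1)] Q(3)] \<alpha>Q by simp
  then show ?thesis
    using fully_centralized_from_conjugate[OF Q(1) R] fully_normalized_imp_centralized[OF fnR]
    by blast
qed

end
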